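(* Suppose $\mathcal{H}_\kappa(L_1,L_2)$ is regular. Let $s\in S$ and let $A_s\xrightarrow{w}F$ be a path in $\mathcal{A}$ from $A_s$ to a final state $F$. Then $w$ is a prefix of some word in $v_s^+$. In addition, the word $v_s$ is uniquely determined, and the loop $A_s\xrightarrow{v_s}A_s$ visits every state $B\in s\setminus\{A_s\}$ exactly once; thus it is a Hamiltonian cycle of $s$ and $|v_s|=N_s$.
   Context: $\Sigma$ is a finite alphabet with at least two letters with an involution $a\mapsto\bar a$ ($\bar{\bar a}=a$), extended to words by $\overline{a_1\cdots a_m}=\bar a_m\cdots\bar a_1$ and to languages elementwise. $\kappa$ is a fixed positive integer. $\mathcal{H}_\kappa(L_1,L_2)=\{\gamma\alpha\beta\bar\alpha\bar\gamma:|\alpha|\ge\kappa,\ \gamma\alpha\beta\bar\alpha\in L_1\text{ or }\alpha\beta\bar\alpha\bar\gamma\in L_2\}$. $L_1,L_2$ are regular; $\mathcal{A}_1=(Q_1,\Sigma,E_1,\{q_{01}\},F_1)$ is a complete DFA accepting $L_1$, $\mathcal{A}_2=(Q_2,\Sigma,E_2,\{q_{02}\},F_2)$ a complete DFA accepting $\overline{L_2}$; $p\cdot w$ is the state reached from $p$ on $w$. Construction of $\mathcal{A}$: $Q_{12}=\{(q_{01}\cdot w,q_{02}\cdot w):w\in\Sigma^*\}$ with $(p_1,p_2)\cdot w=(p_1\cdot w,p_2\cdot w)$. For $(p_1,p_2,q_1,q_2)\in Q_1\times Q_2\times Q_1\times Q_2$ let $B(p_1,p_2,q_1,q_2)=\{w:p_1\cdot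 w=q_1,\ p_2\cdot\bar w=q_2\}$; the quadruple is a basic bridge if this set is nonempty. States of $\mathcal{A}$ are all $((p_1,p_2),q_1,q_2,\ell)$ with $(p_1,p_2)\in Q_{12}$, $q_i\in Q_i$, $\ell\in\{0,\dots,\kappa\}$, $(p_1,p_2,q_1,q_2)$ a basic bridge. For $a\in\Sigma$, $P\in Q_{12}$, $q_i\in Q_i$, there is an $a$-arc from $(P,q_1\cdot\bar a,q_2\cdot\bar a,\ell)$ to $(P\cdot a,q_1,q_2,\ell')$, provided both are states, exactly when: $\ell=\ell'=0$ and $q_1\cdot\bar a\notin F_1$, $q_2\cdot\bar a\notin F_2$; or $\ell=0,\ell'=1$ and ($q_1\cdot\bar a\in F_1$ or $q_2\cdot\bar a\in F_2$); or $1\le\ell<\kappa$ and $\ell'=\ell+1$. Initial states: $((q_{01},q_{02}),q_1',q_2',0)$; final states: those with $\ell=\kappa$. $\mathcal{A}$ is trimmed: states not reachable from an initial state, or from which no final state is reachable, are removed. $S$ is the set of non-trivial strongly connected components of $\mathcal{A}$, i.e. those containing a path $A\xrightarrow{v}A$ with $v$ nonempty; for $s\in S$, $N_s$ is the number of states in $s$. A linear order on the states of $\mathcal{A}$ is fixed; $A_s$ is the least state in $s$, and $v_s$ is a shortest nonempty word with a path $A_s\xrightarrow{v_s}A_s$. *)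

theory Defs
  imports Main "HOL-Library.Sublist"
begin

(* Complete DFA over alphabet 'a with state type 'q (all elements of 'q are states) *)
record ('q, 'a) dfa =
  trans :: "'q \<Rightarrow> 'a \<Rightarrow> 'q"
  init  :: 'q
  fin   :: "'q set"

definition dstar :: "('q \<Rightarrow> 'a \<Rightarrow> 'q) \<Rightarrow> 'q \<Rightarrow> 'a list \<Rightarrow> 'q" where
  "dstar \<delta> p w = foldl \<delta> p w"

definition lang :: "('q, 'a) dfa \<Rightarrow> 'a list set" where
  "lang M = {w. dstar (trans M) (init M) w \<in> fin M}"

definition bar :: "('a \<Rightarrow> 'a) \<Rightarrow> 'a list \<Rightarrow> 'a list" where
  "bar iv w = rev (map iv w)"

definition Hk :: "('a \<Rightarrow> 'a) \<Rightarrow> nat \<Rightarrow> 'a list set \<Rightarrow> 'a list set \<Rightarrow> 'a list set" where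
  "Hk iv k L1 L2 = {\<gamma> @ \<alpha> @ \<beta> @ bar iv \<alpha> @ bar iv \<gamma> | \<gamma> \<alpha> \<beta>.
      length \<alpha> \<ge> k \<and> (\<gamma> @ \<alpha> @ \<beta> @ bar iv \<alpha> \<in> L1 \<or> \<alpha> @ \<beta> @ bar iv \<alpha> @ bar iv \<gamma> \<in> L2)}"

definition regular :: "'a list set \<Rightarrow> bool" where
  "regular L \<longleftrightarrow> (\<exists>(\<delta>::nat \<Rightarrow> 'a \<Rightarrow> nat) q0 (F::nat set) N.
      q0 < N \<and> (\<forall>q<N. \<forall>a. \<delta> q a < N) \<and> L = {w. dstar \<delta> q0 w \<in> F})"

type_synonym ('q1, 'q2) astate = "('q1 \<times> 'q2) \<times> 'q1 \<times> 'q2 \<times> nat"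

definition Q12 :: "('q1, 'a) dfa \<Rightarrow> ('q2, 'a) dfa \<Rightarrow> ('q1 \<times> 'q2) set" where
  "Q12 M1 M2 = {(dstar (trans M1) (init M1) w, dstar (trans M2) (init M2) w) | w. True}"

definition basic_bridge :: "('a \<Rightarrow> 'a) \<Rightarrow> ('q1, 'a) dfa \<Rightarrow> ('q2, 'a) dfa \<Rightarrow> 'q1 \<Rightarrow> 'q2 \<Rightarrow> 'q1 \<Rightarrow> 'q2 \<Rightarrow> bool" where
  "basic_bridge iv M1 M2 p1 p2 q1 q2 \<longleftrightarrow>
     (\<exists>w. dstar (trans M1) p1 w = q1 \<and> dstar (trans M2) p2 (bar iv w) = q2)"

definition AStates :: "('a \<Rightarrow> 'a) \<Rightarrow> nat \<Rightarrow> ('q1, 'a) dfa \<Rightarrow> ('q2, 'a) dfa \<Rightarrow> ('q1, 'q2) astate set" where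
  "AStates iv k M1 M2 = {((p1, p2), q1, q2, l) | p1 p2 q1 q2 l.
      (p1, p2) \<in> Q12 M1 M2 \<and> l \<le> k \<and> basic_bridge iv M1 M2 p1 p2 q1 q2}"

definition AArc :: "('a \<Rightarrow> 'a) \<Rightarrow> nat \<Rightarrow> ('q1, 'a) dfa \<Rightarrow> ('q2, 'a) dfa \<Rightarrow>
    ('q1, 'q2) astate \<Rightarrow> 'a \<Rightarrow> ('q1, 'q2) astate \<Rightarrow> bool" where
  "AArc iv k M1 M2 X a Y \<longleftrightarrow> X \<in> AStates iv k M1 M2 \<and> Y \<in> AStates iv k M1 M2 \<and>
     (\<exists>p1 p2 q1 q2 l l'.
        X = ((p1, p2), trans M1 q1 (iv a), trans M2 q2 (iv a), l) \<and>
        Y = ((trans M1 p1 a, trans M2 p2 a), q1, q2, l') \<and>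
        ((l = 0 \<and> l' = 0 \<and> trans M1 q1 (iv a) \<notin> fin M1 \<and> trans M2 q2 (iv a) \<notin> fin M2) \<or>
         (l = 0 \<and> l' = 1 \<and> (trans M1 q1 (iv a) \<in> fin M1 \<or> trans M2 q2 (iv a) \<in> fin M2)) \<or>
         (1 \<le> l \<and> l < k \<and> l' = l + 1)))"

definition AInit :: "('a \<Rightarrow> 'a) \<Rightarrow> nat \<Rightarrow> ('q1, 'a) dfa \<Rightarrow> ('q2, 'a) dfa \<Rightarrow> ('q1, 'q2) astate set" where
  "AInit iv k M1 M2 = {X \<in> AStates iv k M1 M2. \<exists>q1 q2. X = ((init M1, init M2), q1, q2, 0)}"

definition AFinal :: "('a \<Rightarrow> 'a) \<Rightarrow> nat \<Rightarrow> ('q1, 'a) dfa \<Rightarrow> ('q2, 'a) dfa \<Rightarrow> ('q1, 'q2) astate set" where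
  "AFinal iv k M1 M2 = {X \<in> AStates iv k M1 M2. snd (snd (snd X)) = k}"

definition is_path :: "('s \<Rightarrow> 'a \<Rightarrow> 's \<Rightarrow> bool) \<Rightarrow> 's \<Rightarrow> 'a list \<Rightarrow> 's list \<Rightarrow> 's \<Rightarrow> bool" where
  "is_path E X w xs Y \<longleftrightarrow> length xs = Suc (length w) \<and> xs ! 0 = X \<and> xs ! length w = Y \<and>
     (\<forall>i < length w. E (xs ! i) (w ! i) (xs ! Suc i))"

definition TStates :: "('a \<Rightarrow> 'a) \<Rightarrow> nat \<Rightarrow> ('q1, 'a) dfa \<Rightarrow> ('q2, 'a) dfa \<Rightarrow> ('q1, 'q2) astate set" where
  "TStates iv k M1 M2 = {X.
     (\<exists>I \<in> AInit iv k M1 M2. \<exists>w xs. is_path (AArc iv k M1 M2) I w xs X) \<and>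
     (\<exists>F \<in> AFinal iv k M1 M2. \<exists>w xs. is_path (AArc iv k M1 M2) X w xs F)}"

definition TArc :: "('a \<Rightarrow> 'a) \<Rightarrow> nat \<Rightarrow> ('q1, 'a) dfa \<Rightarrow> ('q2, 'a) dfa \<Rightarrow>
    ('q1, 'q2) astate \<Rightarrow> 'a \<Rightarrow> ('q1, 'q2) astate \<Rightarrow> bool" where
  "TArc iv k M1 M2 X a Y \<longleftrightarrow> AArc iv k M1 M2 X a Y \<and> X \<in> TStates iv k M1 M2 \<and> Y \<in> TStates iv k M1 M2"

definition treach :: "('a \<Rightarrow> 'a) \<Rightarrow> nat \<Rightarrow> ('q1, 'a) dfa \<Rightarrow> ('q2, 'a) dfa \<Rightarrow>
    ('q1, 'q2) astate \<Rightarrow> ('q1, 'q2) astate \<Rightarrow> bool" where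
  "treach iv k M1 M2 X Y \<longleftrightarrow> (\<exists>w xs. is_path (TArc iv k M1 M2) X w xs Y)"

definition scc :: "('a \<Rightarrow> 'a) \<Rightarrow> nat \<Rightarrow> ('q1, 'a) dfa \<Rightarrow> ('q2, 'a) dfa \<Rightarrow>
    ('q1, 'q2) astate \<Rightarrow> ('q1, 'q2) astate set" where
  "scc iv k M1 M2 X = {Y \<in> TStates iv k M1 M2. treach iv k M1 M2 X Y \<and> treach iv k M1 M2 Y X}"

definition SCCs :: "('a \<Rightarrow> 'a) \<Rightarrow> nat \<Rightarrow> ('q1, 'a) dfa \<Rightarrow> ('q2, 'a) dfa \<Rightarrow> ('q1, 'q2) astate set set" where
  "SCCs iv k M1 M2 = {scc iv k M1 M2 X | X. X \<in> TStates iv k M1 M2 \<and>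
      (\<exists>v xs. v \<noteq> [] \<and> is_path (TArc iv k M1 M2) X v xs X)}"

end

theory Submission
  imports Defs
begin

text \<open>Let \<open>u\<close> label a loop at a state \<open>X\<close> of \<open>\<A>\<close> and \<open>w\<close> a path from \<open>X\<close> to a final state.
  Along a path from an initial state to \<open>F\<close> the first accepting state sits exactly \<open>\<kappa>\<close> steps before
  the end, and whether a state is accepting is a membership question for \<open>L\<^sub>1\<close> or \<open>L\<^sub>2\<close>.
  Pumping the loop inside the regular language \<open>\<H>\<^sub>\<kappa>(L\<^sub>1,L\<^sub>2)\<close> produces a word
  \<open>Z' \<beta> (bar Z)\<close> in \<open>\<H>\<^sub>\<kappa>\<close> with \<open>Z = x u\<^sup>n w\<close> and \<open>Z' = x u\<^sup>n\<^sup>+\<^sup>p w\<close>; any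
  factorisation of it that does not make \<open>Z\<close> a prefix of \<open>Z'\<close> would create an accepting state
  too early. Hence \<open>w\<close> is a prefix of \<open>u\<^sup>\<omega>\<close>. Paths ending at level 0 are determined by
  their endpoints and label, so the loops at \<open>A\<^sub>s\<close> are exactly the powers of the shortest
  loop label \<open>v\<^sub>s\<close>, and the loop along \<open>v\<^sub>s\<close> is a simple cycle through the whole component.\<close>

section \<open>Words\<close>

lemma dstar_Nil [simp]: "dstar \<delta> q [] = q"
  by (simp add: dstar_def)

lemma dstar_append [simp]: "dstar \<delta> q (u @ w) = dstar \<delta> (dstar \<delta> q u) w"
  by (simp add: dstar_def)

lemma dstar_Cons [simp]: "dstar \<delta> q (a # w) = dstar \<delta> (\<delta> q a) w"
  by (simp add: dstar_def)

lemma bar_Nil [simp]: "bar iv [] = []"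
  by (simp add: bar_def)

lemma bar_Cons: "bar iv (a # w) = bar iv w @ [iv a]"
  by (simp add: bar_def)

lemma bar_append [simp]: "bar iv (u @ w) = bar iv w @ bar iv u"
  by (simp add: bar_def)

lemma length_bar [simp]: "length (bar iv w) = length w"
  by (simp add: bar_def)

lemma bar_bar [simp]: "\<forall>a. iv (iv a) = a \<Longrightarrow> bar iv (bar iv w) = w"
  by (simp add: bar_def rev_map[symmetric] comp_def)

lemma bar_image_iff: "\<forall>a. iv (iv a) = a \<Longrightarrow> x \<in> bar iv ` L \<longleftrightarrow> bar iv x \<in> L"
  by (auto intro: image_eqI[of x "bar iv" "bar iv x"])

lemma concat_replicate_Suc_snoc: "concat (replicate m v) @ v = concat (replicate (Suc m) v)"
  by (simp add: replicate_append_same[symmetric])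

lemma concat_replicate_mult:
  "concat (replicate N (concat (replicate p u))) = concat (replicate (N * p) u)"
  by (induction N) (auto simp: replicate_add)

lemma length_concat_replicate [simp]: "length (concat (replicate m v)) = m * length v"
  by (induction m) auto

lemma prefix_concat_replicate_mono:
  "N \<le> M \<Longrightarrow> prefix (concat (replicate N v)) (concat (replicate M v))"
  by (metis le_add_diff_inverse replicate_add concat_append prefixI)

lemma prefixes_concat_replicate_eq:
  assumes "prefix x (concat (replicate N v))" "prefix y (concat (replicate M v))"
    and "length x = length y"
  shows "x = y"
proof -
  have "prefix x (concat (replicate (N + M) v))" "prefix y (concat (replicate (N + M) v))"
    using assms prefix_concat_replicate_mono[of N "N + M" v] prefix_concat_replicate_mono[of M "N + M" v]
    by (auto intro: prefix_order.trans)
  then show ?thesis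
    using assms(3) prefix_length_prefix prefix_length_le prefix_order.antisym by (metis order.refl)
qed

lemma prefix_concat_replicate_if_prefix_append:
  assumes "y \<noteq> []" "prefix w (y @ w)"
  shows "\<exists>N. prefix w (concat (replicate N y))"
  using assms(2)
proof (induction "length w" arbitrary: w rule: less_induct)
  case less
  show ?case
  proof (cases "length w \<le> length y")
    case True
    then have "prefix w y"
      using prefix_length_prefix[OF less.prems] by simp
    then show ?thesis
      by (metis concat_replicate_Suc_snoc append_Nil concat_replicate_trivial replicate_0
          concat.simps(1))
  next
    case False
    then obtain w' where w: "w = y @ w'"
      using less.prems by (metis append_eq_append_conv_if append_take_drop_id nle_le prefix_def)
    then have "prefix w' (y @ w')" "length w' < length w"
      using less.prems assms(1) by auto
    then obtain N where "prefix w' (concat (replicate N y))"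
      using less.hyps by blast
    then have "prefix w (concat (replicate (Suc N) y))"
      using w by simp
    then show ?thesis ..
  qed
qed

lemma dstar_closed: "\<forall>q<N. \<forall>a. \<delta> q a < N \<Longrightarrow> q < N \<Longrightarrow> dstar \<delta> q y < N"
  by (induction y arbitrary: q) auto

text \<open>Among the first \<open>N + 1\<close> powers of \<open>u\<close> two lead an \<open>N\<close>-state automaton to the same state.\<close>

lemma regular_power_pumping:
  assumes "regular L"
  shows "\<exists>n p. 0 < p \<and>
    (\<forall>z. x @ concat (replicate n u) @ z \<in> L \<longleftrightarrow> x @ concat (replicate (n + p) u) @ z \<in> L)"
proof -
  obtain \<delta> :: "nat \<Rightarrow> _ \<Rightarrow> nat" and q0 F N where closed: "\<forall>q<N. \<forall>a. \<delta> q a < N" and "q0 < N"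
    and L: "L = {w. dstar \<delta> q0 w \<in> F}"
    using assms unfolding regular_def by blast
  define f where "f j = dstar \<delta> q0 (x @ concat (replicate j u))" for j
  have "f ` {..N} \<subseteq> {..<N}"
    using dstar_closed[OF closed \<open>q0 < N\<close>] unfolding f_def by (auto simp del: dstar_append)
  then have "card (f ` {..N}) < card {..N}"
    by (metis card_atMost card_lessThan card_mono finite_lessThan le_imp_less_Suc)
  then obtain i j where "i < j" "f i = f j"
    by (metis card_image inj_on_def less_irrefl linorder_neqE_nat)
  then show ?thesis
    unfolding L f_def by (intro exI[of _ i] exI[of _ "j - i"]) (auto simp flip: append_assoc)
qed

section \<open>Paths\<close>

lemma is_path_length: "is_path E X w xs Y \<Longrightarrow> length xs = Suc (length w)"
  by (simp add: is_path_def)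

lemma is_path_first: "is_path E X w xs Y \<Longrightarrow> xs ! 0 = X"
  by (simp add: is_path_def)

lemma is_path_last: "is_path E X w xs Y \<Longrightarrow> xs ! length w = Y"
  by (simp add: is_path_def)

lemma is_path_step: "is_path E X w xs Y \<Longrightarrow> i < length w \<Longrightarrow> E (xs ! i) (w ! i) (xs ! Suc i)"
  by (simp add: is_path_def)

lemma is_path_Nil: "is_path E X [] [X] X"
  by (simp add: is_path_def)

lemma is_path_NilD: "is_path E X [] xs Y \<Longrightarrow> Y = X \<and> xs = [X]"
  unfolding is_path_def by (cases xs) auto

lemma is_path_ConsD:
  assumes "is_path E X (a # w) xs Y"
  shows "E X a (xs ! 1) \<and> is_path E (xs ! 1) w (tl xs) Y"
  using assms unfolding is_path_def by (cases xs) auto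

lemma nth_append_tl:
  "length xs = Suc n \<Longrightarrow> xs ! n = ys ! 0 \<Longrightarrow> k < length ys \<Longrightarrow> (xs @ tl ys) ! (n + k) = ys ! k"
  by (cases k) (auto simp: nth_append nth_tl)

lemma is_path_append:
  assumes "is_path E X u xs Y" "is_path E Y w ys Z"
  shows "is_path E X (u @ w) (xs @ tl ys) Z"
proof -
  have lx: "length xs = Suc (length u)" and ly: "length ys = Suc (length w)"
    using assms by (auto simp: is_path_def)
  have second: "(xs @ tl ys) ! (length u + k) = ys ! k" if "k \<le> length w" for k
    using nth_append_tl[OF lx] that ly assms by (simp add: is_path_def)
  show ?thesis unfolding is_path_def
  proof (intro conjI allI impI)
    fix i assume i: "i < length (u @ w)"
    show "E ((xs @ tl ys) ! i) ((u @ w) ! i) ((xs @ tl ys) ! Suc i)"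
    proof (cases "i < length u")
      case True
      then show ?thesis using assms lx by (simp add: is_path_def nth_append)
    next
      case False
      then obtain k where k: "i = length u + k" "k < length w"
        using i by (metis add_diff_inverse_nat add_less_cancel_left length_append)
      then show ?thesis
        using second[of k] second[of "Suc k"] is_path_step[OF assms(2) k(2)] by (simp add: nth_append)
    qed
  qed (use assms lx ly second[of "length w"] in \<open>auto simp: is_path_def nth_append\<close>)
qed

lemma is_path_take:
  "is_path E X w xs Y \<Longrightarrow> i \<le> length w \<Longrightarrow> is_path E X (take i w) (take (Suc i) xs) (xs ! i)"
  unfolding is_path_def by (auto simp: min_def)

lemma is_path_drop:
  "is_path E X w xs Y \<Longrightarrow> i \<le> length w \<Longrightarrow> is_path E (xs ! i) (drop i w) (drop i xs) Y"
  unfolding is_path_def by auto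

lemma is_path_mono: "is_path E X w xs Y \<Longrightarrow> (\<And>a b c. E a b c \<Longrightarrow> E' a b c) \<Longrightarrow> is_path E' X w xs Y"
  by (simp add: is_path_def)

lemma is_path_concat_replicate:
  "is_path E X u xs X \<Longrightarrow> \<exists>ys. is_path E X (concat (replicate n u)) ys X"
proof (induction n)
  case 0
  then show ?case using is_path_Nil by fastforce
next
  case (Suc n)
  then show ?case
    using is_path_append concat_replicate_Suc_snoc by metis
qed

definition path_reach :: "('s \<Rightarrow> 'a \<Rightarrow> 's \<Rightarrow> bool) \<Rightarrow> 's \<Rightarrow> 's \<Rightarrow> bool" where
  "path_reach E X Y \<longleftrightarrow> (\<exists>w xs. is_path E X w xs Y)"

lemma path_reach_trans: "path_reach E X Y \<Longrightarrow> path_reach E Y Z \<Longrightarrow> path_reach E X Z"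
  unfolding path_reach_def by (meson is_path_append)

section \<open>Shortest loops in loop-deterministic graphs\<close>

locale shortest_loop =
  fixes E :: "'s \<Rightarrow> 'a \<Rightarrow> 's \<Rightarrow> bool" and A :: 's and v :: "'a list"
  assumes loop_path_unique: "is_path E A w xs A \<Longrightarrow> is_path E A w ys A \<Longrightarrow> xs = ys"
    and loop_v: "\<exists>xs. is_path E A v xs A"
    and v_nonempty: "v \<noteq> []"
    and v_shortest: "u \<noteq> [] \<Longrightarrow> is_path E A u xs A \<Longrightarrow> length v \<le> length u"
    and loop_prefix_pow: "is_path E A u xs A \<Longrightarrow> \<exists>N. prefix u (concat (replicate N v))"
begin

lemma loop_eq_v: "is_path E A u xs A \<Longrightarrow> length u = length v \<Longrightarrow> u = v"
  using loop_prefix_pow prefixes_concat_replicate_eq[of v 1 v] by fastforce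

lemma loop_commute_v:
  assumes "is_path E A u us A"
  shows "u @ v = v @ u"
proof -
  obtain vs where vs: "is_path E A v vs A"
    using loop_v by blast
  show ?thesis
    using loop_prefix_pow[OF is_path_append[OF assms vs]] loop_prefix_pow[OF is_path_append[OF vs assms]]
      prefixes_concat_replicate_eq by fastforce
qed

text \<open>A loop \<open>u\<close> longer than \<open>v\<close> returns to \<open>A\<close> after \<open>|u| - |v|\<close> steps: the unique loop path
  for \<open>u v = v u\<close> passes through \<open>A\<close> at positions \<open>|u|\<close> and \<open>|v|\<close>.\<close>

lemma loop_returns_before_v:
  assumes us: "is_path E A u us A" and le: "length v \<le> length u"
  shows "us ! (length u - length v) = A"
proof -
  obtain vs where vs: "is_path E A v vs A"
    using loop_v by blast
  have "is_path E A (u @ v) (vs @ tl us) A"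
    using is_path_append[OF vs us] loop_commute_v[OF us] by simp
  then have "us @ tl vs = vs @ tl us"
    using loop_path_unique is_path_append[OF us vs] by blast
  moreover have "(us @ tl vs) ! length u = A"
    using is_path_length[OF us] is_path_last[OF us] by (simp add: nth_append)
  moreover have "(vs @ tl us) ! (length v + (length u - length v)) = us ! (length u - length v)"
    using nth_append_tl[OF is_path_length[OF vs]] is_path_last[OF vs] is_path_first[OF us]
      is_path_length[OF us] by simp
  ultimately show ?thesis
    using le by simp
qed

lemma loop_pow: "is_path E A u us A \<Longrightarrow> \<exists>m. u = concat (replicate m v)"
proof (induction "length u" arbitrary: u us rule: less_induct)
  case less
  show ?case
  proof (cases "length u \<le> length v")
    case True
    then have "u = [] \<or> u = v"
      using less.prems v_shortest loop_eq_v by fastforce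
    then show ?thesis
      by (metis concat_replicate_Suc_snoc append_Nil concat.simps(1) replicate_0)
  next
    case False
    define k where "k = length u - length v"
    have "0 < length v"
      using v_nonempty by simp
    then have "k < length u"
      using False unfolding k_def by linarith
    then have k: "k \<le> length u" "length (take k u) < length u" "length (drop k u) = length v"
      using False unfolding k_def by auto
    have "us ! k = A"
      using loop_returns_before_v[OF less.prems] False unfolding k_def by simp
    then have "is_path E A (take k u) (take (Suc k) us) A" "is_path E A (drop k u) (drop k us) A"
      using is_path_take[OF less.prems k(1)] is_path_drop[OF less.prems k(1)] is_path_first[OF less.prems]
      by auto
    then obtain m where "take k u = concat (replicate m v)" "drop k u = v"
      using less.hyps k loop_eq_v by blast
    then have "u = concat (replicate (Suc m) v)"
      by (metis append_take_drop_id concat_replicate_Suc_snoc)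
    then show ?thesis ..
  qed
qed

lemma v_path_distinct:
  assumes vs: "is_path E A v vs A" and ij: "i < j" "j \<le> length v" and eq: "vs ! i = vs ! j"
  shows "i = 0 \<and> j = length v"
proof (rule ccontr)
  assume inner: "\<not> (i = 0 \<and> j = length v)"
  have "is_path E A (take i v) (take (Suc i) vs) (vs ! j)"
    using is_path_take[OF vs, of i] ij eq by simp
  then have "is_path E A (take i v @ drop j v) (take (Suc i) vs @ tl (drop j vs)) A"
    by (rule is_path_append[OF _ is_path_drop[OF vs ij(2)]])
  moreover have "take i v @ drop j v \<noteq> []"
    using ij inner by auto
  ultimately have "length v \<le> length (take i v @ drop j v)"
    using v_shortest by blast
  then show False
    using ij by simp
qed

lemma pow_path_nth:
  assumes vs: "is_path E A v vs A"
  shows "is_path E A (concat (replicate m v)) ys A \<Longrightarrow> i \<le> m * length v \<Longrightarrow> ys ! i = vs ! (i mod length v)"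
proof (induction m arbitrary: ys i)
  case 0
  then show ?case
    using is_path_NilD is_path_first[OF vs] by fastforce
next
  case (Suc m)
  obtain zs where zs: "is_path E A (concat (replicate m v)) zs A"
    using is_path_concat_replicate[OF vs] by blast
  have ys: "ys = zs @ tl vs"
    using loop_path_unique[OF Suc.prems(1)] is_path_append[OF zs vs] concat_replicate_Suc_snoc by metis
  have lzs: "length zs = Suc (m * length v)"
    using is_path_length[OF zs] by simp
  show ?case
  proof (cases "i \<le> m * length v")
    case True
    then show ?thesis
      using Suc.IH[OF zs] ys lzs by (simp add: nth_append)
  next
    case False
    define k where "k = i - m * length v"
    have k: "i = m * length v + k" "0 < k" "k \<le> length v"
      using Suc.prems False unfolding k_def by auto
    have "ys ! i = vs ! k"
      using nth_append_tl[OF lzs, of vs k] ys is_path_last[OF zs] is_path_first[OF vs]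
        is_path_length[OF vs] k by simp
    moreover have "vs ! k = vs ! (i mod length v)"
      using k is_path_first[OF vs] is_path_last[OF vs] by (cases "k = length v") auto
    ultimately show ?thesis
      by simp
  qed
qed

abbreviation component :: "'s set" where
  "component \<equiv> {B. path_reach E A B \<and> path_reach E B A}"

lemma v_path_visits:
  assumes vs: "is_path E A v vs A" and B: "B \<in> component"
  shows "\<exists>i < length v. vs ! i = B"
proof -
  obtain p ps q qs where ps: "is_path E A p ps B" and qs: "is_path E B q qs A"
    using B unfolding path_reach_def by blast
  have pq: "is_path E A (p @ q) (ps @ tl qs) A"
    using is_path_append[OF ps qs] .
  then obtain m where m: "p @ q = concat (replicate m v)"
    using loop_pow by blast
  have "length p \<le> m * length v"
    using arg_cong[OF m, of length] by simp
  then have "(ps @ tl qs) ! length p = vs ! (length p mod length v)"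
    using pow_path_nth[OF vs, of m "ps @ tl qs" "length p"] pq unfolding m by blast
  moreover have "(ps @ tl qs) ! length p = B"
    using is_path_length[OF ps] is_path_last[OF ps] by (simp add: nth_append)
  moreover have "length p mod length v < length v"
    using v_nonempty by simp
  ultimately show ?thesis
    by auto
qed

lemma v_path_visits_once:
  assumes vs: "is_path E A v vs A" and B: "B \<in> component - {A}"
  shows "card {i. i \<le> length v \<and> vs ! i = B} = 1"
proof -
  obtain r where r: "r < length v" "vs ! r = B"
    using v_path_visits[OF vs] B by blast
  have "vs ! 0 \<noteq> B"
    using B is_path_first[OF vs] by auto
  have "i = r" if "i \<le> length v" "vs ! i = B" for i
  proof (cases i r rule: linorder_cases)
    case less
    then show ?thesis using v_path_distinct[OF vs less] r that by simp
  next
    case greater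
    then show ?thesis using v_path_distinct[OF vs greater] r that \<open>vs ! 0 \<noteq> B\<close> by auto
  qed
  then have "{i. i \<le> length v \<and> vs ! i = B} = {r}"
    using r by auto
  then show ?thesis
    by simp
qed

lemma length_v_eq_card_component: "length v = card component"
proof -
  obtain vs where vs: "is_path E A v vs A"
    using loop_v by blast
  have "component = (!) vs ` {..<length v}"
  proof (intro equalityI subsetI)
    fix B assume "B \<in> component"
    then show "B \<in> (!) vs ` {..<length v}"
      using v_path_visits[OF vs] by blast
  next
    fix B assume "B \<in> (!) vs ` {..<length v}"
    then obtain i where i: "i \<le> length v" "B = vs ! i"
      by (auto intro: less_imp_le)
    have "path_reach E A B" "path_reach E B A"
      using is_path_take[OF vs i(1)] is_path_drop[OF vs i(1)] unfolding path_reach_def i(2) by blast+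
    then show "B \<in> component"
      by simp
  qed
  moreover have "inj_on ((!) vs) {..<length v}"
  proof (rule inj_onI)
    fix i j assume "i \<in> {..<length v}" "j \<in> {..<length v}" "vs ! i = vs ! j"
    then show "i = j"
      using v_path_distinct[OF vs, of i j] v_path_distinct[OF vs, of j i]
      by (cases i j rule: linorder_cases) auto
  qed
  ultimately show ?thesis
    by (simp add: card_image)
qed

end

section \<open>The automaton \<open>\<A>\<close>\<close>

definition pdstar :: "('q1, 'a) dfa \<Rightarrow> ('q2, 'a) dfa \<Rightarrow> 'q1 \<times> 'q2 \<Rightarrow> 'a list \<Rightarrow> 'q1 \<times> 'q2" where
  "pdstar M1 M2 P w = (dstar (trans M1) (fst P) w, dstar (trans M2) (snd P) w)"

lemma pdstar_append [simp]: "pdstar M1 M2 (pdstar M1 M2 P u) w = pdstar M1 M2 P (u @ w)"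
  by (simp add: pdstar_def)

abbreviation bwd :: "('q1, 'q2) astate \<Rightarrow> 'q1 \<times> 'q2" where
  "bwd X \<equiv> (fst (snd X), fst (snd (snd X)))"

abbreviation level :: "('q1, 'q2) astate \<Rightarrow> nat" where
  "level X \<equiv> snd (snd (snd X))"

lemma astate_eqI: "fst X = fst Y \<Longrightarrow> bwd X = bwd Y \<Longrightarrow> level X = level Y \<Longrightarrow> X = Y"
  by (simp add: prod_eq_iff)

definition accepting :: "('q1, 'a) dfa \<Rightarrow> ('q2, 'a) dfa \<Rightarrow> ('q1, 'q2) astate \<Rightarrow> bool" where
  "accepting M1 M2 X \<longleftrightarrow> fst (bwd X) \<in> fin M1 \<or> snd (bwd X) \<in> fin M2"

definition bridge_word :: "('a \<Rightarrow> 'a) \<Rightarrow> ('q1, 'a) dfa \<Rightarrow> ('q2, 'a) dfa \<Rightarrow>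
    'q1 \<times> 'q2 \<Rightarrow> 'q1 \<times> 'q2 \<Rightarrow> 'a list \<Rightarrow> bool" where
  "bridge_word iv M1 M2 P Q \<beta> \<longleftrightarrow>
     dstar (trans M1) (fst P) \<beta> = fst Q \<and> dstar (trans M2) (snd P) (bar iv \<beta>) = snd Q"

lemma AStates_bridge_word: "X \<in> AStates iv k M1 M2 \<Longrightarrow> \<exists>\<beta>. bridge_word iv M1 M2 (fst X) (bwd X) \<beta>"
  by (auto simp: AStates_def basic_bridge_def bridge_word_def)

lemma AArcD:
  assumes "AArc iv k M1 M2 X a Y"
  shows "fst Y = pdstar M1 M2 (fst X) [a]" "bwd X = pdstar M1 M2 (bwd Y) [iv a]"
    "(level X = 0 \<and> level Y = 0 \<and> \<not> accepting M1 M2 X) \<or> (level X = 0 \<and> level Y = 1 \<and> accepting M1 M2 X)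
     \<or> (1 \<le> level X \<and> level X < k \<and> level Y = level X + 1)"
  using assms unfolding AArc_def accepting_def pdstar_def by auto

lemma AArc_path_fst:
  assumes "is_path (AArc iv k M1 M2) X w xs Y"
  shows "j \<le> length w \<Longrightarrow> fst (xs ! j) = pdstar M1 M2 (fst X) (take j w)"
proof (induction j)
  case 0
  then show ?case using is_path_first[OF assms] by (simp add: pdstar_def)
next
  case (Suc j)
  then show ?case
    using AArcD(1)[OF is_path_step[OF assms]] by (simp add: take_Suc_conv_app_nth)
qed

lemma AArc_path_bwd:
  assumes "is_path (AArc iv k M1 M2) X w xs Y"
  shows "j \<le> length w \<Longrightarrow> bwd (xs ! j) = pdstar M1 M2 (bwd Y) (bar iv (drop j w))"
proof (induction "length w - j" arbitrary: j)
  case 0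
  then show ?case using is_path_last[OF assms] by (simp add: pdstar_def)
next
  case (Suc m)
  then have "drop j w = w ! j # drop (Suc j) w"
    by (simp add: Cons_nth_drop_Suc)
  then show ?case
    using Suc AArcD(2)[OF is_path_step[OF assms]] by (simp add: bar_Cons)
qed

lemma AInit_path_fst:
  "I \<in> AInit iv k M1 M2 \<Longrightarrow> is_path (AArc iv k M1 M2) I w xs Y \<Longrightarrow> fst Y = pdstar M1 M2 (init M1, init M2) w"
  using AArc_path_fst[of iv k M1 M2 I w xs Y "length w"] is_path_last[of _ I w xs Y] by (auto simp: AInit_def)

lemma AArc_path_level_pos:
  "is_path (AArc iv k M1 M2) X w xs Y \<Longrightarrow> 1 \<le> level X \<Longrightarrow> level Y = level X + length w"
proof (induction w arbitrary: X xs)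
  case Nil
  then show ?case using is_path_NilD by fastforce
next
  case (Cons a w)
  note step = is_path_ConsD[OF Cons.prems(1)]
  have "level (xs ! 1) = level X + 1"
    using AArcD(3)[OF conjunct1[OF step]] Cons.prems(2) by auto
  then show ?case
    using Cons.IH[OF conjunct2[OF step]] by simp
qed

lemma AArc_loop_level: "is_path (AArc iv k M1 M2) X w xs X \<Longrightarrow> w \<noteq> [] \<Longrightarrow> level X = 0"
  using AArc_path_level_pos[of iv k M1 M2 X w xs X] by fastforce

lemma AArc_path_level_zero:
  assumes "is_path (AArc iv k M1 M2) X w xs Y" "level Y = 0" "j \<le> length w"
  shows "level (xs ! j) = 0"
proof (rule ccontr)
  assume "level (xs ! j) \<noteq> 0"
  then have "level Y = level (xs ! j) + length (drop j w)"
    using AArc_path_level_pos[OF is_path_drop[OF assms(1,3)]] by simp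
  then show False
    using assms(2) \<open>level (xs ! j) \<noteq> 0\<close> by simp
qed

text \<open>The first components are fixed by the forward run from \<open>X\<close>, the backward ones by the
  backward run from \<open>Y\<close>, and on a path ending at level 0 every level is 0.\<close>

lemma AArc_path_unique:
  assumes "is_path (AArc iv k M1 M2) X w xs Y" "is_path (AArc iv k M1 M2) X w ys Y" "level Y = 0"
  shows "xs = ys"
proof (rule nth_equalityI)
  show "length xs = length ys"
    using assms by (simp add: is_path_def)
  fix j assume "j < length xs"
  then have "j \<le> length w"
    using assms by (simp add: is_path_def)
  then show "xs ! j = ys ! j"
    using AArc_path_fst[OF assms(1)] AArc_path_fst[OF assms(2)] AArc_path_bwd[OF assms(1)]
      AArc_path_bwd[OF assms(2)] AArc_path_level_zero[OF assms(1,3)] AArc_path_level_zero[OF assms(2,3)]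
    by (intro astate_eqI) auto
qed

text \<open>The level leaves 0 exactly at the first accepting state and then increases by one per step.\<close>

lemma AArc_path_first_accepting:
  "is_path (AArc iv k M1 M2) X w xs Y \<Longrightarrow> level X = 0 \<Longrightarrow> 0 < level Y \<Longrightarrow>
    level Y \<le> length w \<and> accepting M1 M2 (xs ! (length w - level Y)) \<and>
    (\<forall>j < length w - level Y. \<not> accepting M1 M2 (xs ! j))"
proof (induction w arbitrary: X xs)
  case Nil
  then show ?case using is_path_NilD by fastforce
next
  case (Cons a w)
  note step = is_path_ConsD[OF Cons.prems(1)]
  have x0: "xs ! 0 = X"
    using is_path_first[OF Cons.prems(1)] .
  consider "level (xs ! 1) = 0" "\<not> accepting M1 M2 X" | "level (xs ! 1) = 1" "accepting M1 M2 X"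
    using AArcD(3)[OF conjunct1[OF step]] Cons.prems(2) by auto
  then show ?case
  proof cases
    case 1
    have IH: "level Y \<le> length w \<and> accepting M1 M2 (tl xs ! (length w - level Y)) \<and>
        (\<forall>j < length w - level Y. \<not> accepting M1 M2 (tl xs ! j))"
      using Cons.IH[OF conjunct2[OF step] 1(1) Cons.prems(3)] .
    have tl: "tl xs ! j = xs ! Suc j" if "j \<le> length w" for j
      using is_path_length[OF Cons.prems(1)] that by (simp add: nth_tl)
    have m: "length (a # w) - level Y = Suc (length w - level Y)"
      using IH by (simp add: Suc_diff_le)
    show ?thesis
    proof (intro conjI allI impI)
      show "level Y \<le> length (a # w)"
        using IH by simp
      show "accepting M1 M2 (xs ! (length (a # w) - level Y))"
        using IH tl[of "length w - level Y"] unfolding m by simp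
      fix j assume "j < length (a # w) - level Y"
      then show "\<not> accepting M1 M2 (xs ! j)"
        using IH tl[of "j - 1"] 1 x0 unfolding m by (cases j) auto
    qed
  next
    case 2
    then have "level Y = Suc (length w)"
      using AArc_path_level_pos[OF conjunct2[OF step]] 2(1) by simp
    then show ?thesis
      using 2 x0 by simp
  qed
qed

lemma AArc_path_accepting_iff:
  assumes inv: "\<forall>a. iv (iv a) = a" and L1: "lang M1 = L1" and L2: "lang M2 = bar iv ` L2"
    and path: "is_path (AArc iv k M1 M2) X Z xs F" and g: "g \<le> length Z"
    and \<beta>: "bridge_word iv M1 M2 (fst F) (bwd F) \<beta>"
    and Z0: "fst F = pdstar M1 M2 (init M1, init M2) Z0"
  shows "accepting M1 M2 (xs ! g) \<longleftrightarrow>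
    Z0 @ \<beta> @ bar iv (drop g Z) \<in> L1 \<or> drop g Z @ \<beta> @ bar iv Z0 \<in> L2"
proof -
  have "bwd (xs ! g) = pdstar M1 M2 (bwd F) (bar iv (drop g Z))"
    using AArc_path_bwd[OF path g] .
  then have "fst (bwd (xs ! g)) = dstar (trans M1) (init M1) (Z0 @ \<beta> @ bar iv (drop g Z))"
    "snd (bwd (xs ! g)) = dstar (trans M2) (init M2) (Z0 @ bar iv \<beta> @ bar iv (drop g Z))"
    using \<beta> Z0 by (auto simp: pdstar_def bridge_word_def)
  moreover have "Z0 @ bar iv \<beta> @ bar iv (drop g Z) \<in> lang M2 \<longleftrightarrow> drop g Z @ \<beta> @ bar iv Z0 \<in> L2"
    using L2 bar_image_iff[OF inv] inv by simp
  ultimately show ?thesis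
    using L1 unfolding accepting_def lang_def by auto
qed

context
  fixes iv :: "'a \<Rightarrow> 'a" and \<kappa> :: nat and M1 :: "('q1, 'a) dfa" and M2 :: "('q2, 'a) dfa"
    and L1 L2 :: "'a list set"
  assumes inv: "\<forall>a. iv (iv a) = a" and \<kappa>: "0 < \<kappa>"
    and L1: "lang M1 = L1" and L2: "lang M2 = bar iv ` L2"
begin

lemma Hk_of_AFinal_path:
  assumes path: "is_path (AArc iv \<kappa> M1 M2) X Z xs F" "level X = 0" and F: "F \<in> AFinal iv \<kappa> M1 M2"
    and \<beta>: "bridge_word iv M1 M2 (fst F) (bwd F) \<beta>"
    and Z: "fst F = pdstar M1 M2 (init M1, init M2) Z"
  shows "Z @ \<beta> @ bar iv Z \<in> Hk iv \<kappa> L1 L2"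
proof -
  define m where "m = length Z - \<kappa>"
  have first: "\<kappa> \<le> length Z" "accepting M1 M2 (xs ! m)"
    using AArc_path_first_accepting[OF path] F \<kappa> unfolding m_def AFinal_def by auto
  define \<gamma> \<alpha> where "\<gamma> = take m Z" and "\<alpha> = drop m Z"
  have Z_split: "Z = \<gamma> @ \<alpha>" and "length \<alpha> = \<kappa>"
    using first unfolding \<gamma>_def \<alpha>_def m_def by auto
  have "Z @ \<beta> @ bar iv \<alpha> \<in> L1 \<or> \<alpha> @ \<beta> @ bar iv Z \<in> L2"
    using AArc_path_accepting_iff[OF inv L1 L2 path(1) _ \<beta> Z, of m] first unfolding \<alpha>_def m_def by simp
  then have "\<gamma> @ \<alpha> @ \<beta> @ bar iv \<alpha> \<in> L1 \<or> \<alpha> @ \<beta> @ bar iv \<alpha> @ bar iv \<gamma> \<in> L2"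
    using Z_split by simp
  moreover note Z_split \<open>length \<alpha> = \<kappa>\<close>
  ultimately show ?thesis
    unfolding Hk_def by fastforce
qed

text \<open>If a factorisation \<open>\<gamma> \<alpha> \<beta>' (bar \<alpha>) (bar \<gamma>)\<close> of \<open>Z' \<beta> (bar Z)\<close> has \<open>\<gamma> \<alpha>\<close> shorter
  than \<open>Z\<close>, its witnessing membership in \<open>L\<^sub>1\<close> or \<open>L\<^sub>2\<close> makes the state at position
  \<open>|\<gamma>|\<close> of one of the two paths accepting, earlier than the first accepting state.\<close>

lemma AFinal_paths_prefix_if_Hk:
  assumes path: "is_path (AArc iv \<kappa> M1 M2) X Z xs F" "level X = 0"
    and path': "is_path (AArc iv \<kappa> M1 M2) X' Z' xs' F" "level X' = 0"
    and F: "F \<in> AFinal iv \<kappa> M1 M2"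
    and \<beta>: "bridge_word iv M1 M2 (fst F) (bwd F) \<beta>"
    and Z: "fst F = pdstar M1 M2 (init M1, init M2) Z"
    and Z': "fst F = pdstar M1 M2 (init M1, init M2) Z'"
    and le: "length Z \<le> length Z'" and H: "Z' @ \<beta> @ bar iv Z \<in> Hk iv \<kappa> L1 L2"
  shows "prefix Z Z'"
proof -
  obtain \<gamma> \<alpha> \<beta>' where W: "Z' @ \<beta> @ bar iv Z = \<gamma> @ \<alpha> @ \<beta>' @ bar iv \<alpha> @ bar iv \<gamma>"
    and \<alpha>: "\<kappa> \<le> length \<alpha>"
    and mem: "\<gamma> @ \<alpha> @ \<beta>' @ bar iv \<alpha> \<in> L1 \<or> \<alpha> @ \<beta>' @ bar iv \<alpha> @ bar iv \<gamma> \<in> L2"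
    using H unfolding Hk_def by blast
  have level_F: "0 < level F"
    using F \<kappa> by (simp add: AFinal_def)
  show ?thesis
  proof (cases "length Z \<le> length (\<gamma> @ \<alpha>)")
    case True
    have "suffix (bar iv (\<gamma> @ \<alpha>)) (Z' @ \<beta> @ bar iv Z)"
      unfolding W suffix_def by (rule exI[of _ "\<gamma> @ \<alpha> @ \<beta>'"]) simp
    moreover have "suffix (bar iv Z) (Z' @ \<beta> @ bar iv Z)"
      unfolding suffix_def by (rule exI[of _ "Z' @ \<beta>"]) simp
    ultimately have "suffix (bar iv Z) (bar iv (\<gamma> @ \<alpha>))"
      using suffix_length_suffix True by (metis length_bar)
    then obtain zs where "bar iv (\<gamma> @ \<alpha>) = zs @ bar iv Z"
      unfolding suffix_def by blast
    then have "\<gamma> @ \<alpha> = Z @ bar iv zs"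
      using bar_bar[OF inv, of "\<gamma> @ \<alpha>"] inv by simp
    then have "Z' @ \<beta> @ bar iv Z = Z @ (bar iv zs @ \<beta>' @ bar iv \<alpha> @ bar iv \<gamma>)"
      unfolding W by (metis append.assoc)
    then have "prefix Z (Z' @ \<beta> @ bar iv Z)"
      by (rule prefixI)
    moreover have "prefix Z' (Z' @ \<beta> @ bar iv Z)"
      by simp
    ultimately show ?thesis
      using prefix_length_prefix le by blast
  next
    case False
    define g where "g = length \<gamma>"
    have "length \<gamma> + length \<alpha> < length Z"
      using False by simp
    then have g: "g < length Z - \<kappa>" "g < length Z' - \<kappa>"
      using \<alpha> le unfolding g_def by linarith+
    have "bar iv Z = bar iv (drop g Z) @ bar iv (take g Z)"
      by (metis append_take_drop_id bar_append)
    then have "(Z' @ \<beta> @ bar iv (drop g Z)) @ bar iv (take g Z) = (\<gamma> @ \<alpha> @ \<beta>' @ bar iv \<alpha>) @ bar iv \<gamma>"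
      using W by simp
    moreover have "length (bar iv (take g Z)) = length (bar iv \<gamma>)"
      using g unfolding g_def by simp
    ultimately have L1_word: "Z' @ \<beta> @ bar iv (drop g Z) = \<gamma> @ \<alpha> @ \<beta>' @ bar iv \<alpha>"
      using append_eq_append_conv by blast
    have "take g Z' @ (drop g Z' @ \<beta> @ bar iv Z) = Z' @ \<beta> @ bar iv Z"
      by (simp only: append_assoc[symmetric] append_take_drop_id)
    then have "take g Z' @ (drop g Z' @ \<beta> @ bar iv Z) = \<gamma> @ (\<alpha> @ \<beta>' @ bar iv \<alpha> @ bar iv \<gamma>)"
      using W by simp
    moreover have "length (take g Z') = length \<gamma>"
      using g unfolding g_def by simp
    ultimately have L2_word: "drop g Z' @ \<beta> @ bar iv Z = \<alpha> @ \<beta>' @ bar iv \<alpha> @ bar iv \<gamma>"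
      using append_eq_append_conv by blast
    have "accepting M1 M2 (xs ! g) \<or> accepting M1 M2 (xs' ! g)"
      using mem L1_word L2_word AArc_path_accepting_iff[OF inv L1 L2 path(1) _ \<beta> Z', of g]
        AArc_path_accepting_iff[OF inv L1 L2 path'(1) _ \<beta> Z, of g] g by auto
    then show ?thesis
      using AArc_path_first_accepting[OF path level_F] AArc_path_first_accepting[OF path' level_F] g F
      by (auto simp: AFinal_def)
  qed
qed

text \<open>With \<open>Z = x u\<^sup>n w\<close>, pumping turns \<open>Z \<beta> (bar Z) \<in> \<H>\<^sub>\<kappa>\<close> into
  \<open>x u\<^sup>n\<^sup>+\<^sup>p w \<beta> (bar Z) \<in> \<H>\<^sub>\<kappa>\<close>, which forces \<open>w\<close> to be a prefix of \<open>u\<^sup>p w\<close>.\<close>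

lemma loop_path_to_AFinal_prefix_pow:
  assumes reg: "regular (Hk iv \<kappa> L1 L2)" and I: "I \<in> AInit iv \<kappa> M1 M2"
    and x: "is_path (AArc iv \<kappa> M1 M2) I x xs X"
    and u: "is_path (AArc iv \<kappa> M1 M2) X u us X" "u \<noteq> []"
    and w: "is_path (AArc iv \<kappa> M1 M2) X w ws F" and F: "F \<in> AFinal iv \<kappa> M1 M2"
  shows "\<exists>N. prefix w (concat (replicate N u))"
proof -
  obtain n p where "0 < p" and pump: "\<forall>z. x @ concat (replicate n u) @ z \<in> Hk iv \<kappa> L1 L2 \<longleftrightarrow>
      x @ concat (replicate (n + p) u) @ z \<in> Hk iv \<kappa> L1 L2"
    using regular_power_pumping[OF reg] by blast
  obtain un unp where un: "is_path (AArc iv \<kappa> M1 M2) X (concat (replicate n u)) un X"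
    and unp: "is_path (AArc iv \<kappa> M1 M2) X (concat (replicate (n + p) u)) unp X"
    using is_path_concat_replicate[OF u(1)] by blast
  define Z Z' where "Z = x @ concat (replicate n u) @ w" and "Z' = x @ concat (replicate (n + p) u) @ w"
  have path: "is_path (AArc iv \<kappa> M1 M2) I Z (xs @ tl (un @ tl ws)) F"
    unfolding Z_def by (intro is_path_append[OF x] is_path_append[OF un w])
  have path': "is_path (AArc iv \<kappa> M1 M2) I Z' (xs @ tl (unp @ tl ws)) F"
    unfolding Z'_def by (intro is_path_append[OF x] is_path_append[OF unp w])
  have level_I: "level I = 0"
    using I by (auto simp: AInit_def)
  have "F \<in> AStates iv \<kappa> M1 M2"
    using F by (simp add: AFinal_def)
  then obtain \<beta> where \<beta>: "bridge_word iv M1 M2 (fst F) (bwd F) \<beta>"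
    using AStates_bridge_word by blast
  have "Z @ \<beta> @ bar iv Z \<in> Hk iv \<kappa> L1 L2"
    using Hk_of_AFinal_path[OF path level_I F \<beta> AInit_path_fst[OF I path]] .
  then have "Z' @ \<beta> @ bar iv Z \<in> Hk iv \<kappa> L1 L2"
    using pump[rule_format, of "w @ \<beta> @ bar iv Z"] unfolding Z_def Z'_def by simp
  then have "prefix Z Z'"
    using AFinal_paths_prefix_if_Hk[OF path level_I path' level_I F \<beta> AInit_path_fst[OF I path]
        AInit_path_fst[OF I path']]
    unfolding Z_def Z'_def by simp
  then have "prefix w (concat (replicate p u) @ w)"
    unfolding Z_def Z'_def by (simp add: replicate_add)
  moreover have "concat (replicate p u) \<noteq> []"
    using \<open>0 < p\<close> u(2) by (cases p) auto
  ultimately obtain N where "prefix w (concat (replicate N (concat (replicate p u))))"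
    using prefix_concat_replicate_if_prefix_append by blast
  then show ?thesis
    unfolding concat_replicate_mult by blast
qed

end

lemma TArc_path_AArc: "is_path (TArc iv k M1 M2) X w xs Y \<Longrightarrow> is_path (AArc iv k M1 M2) X w xs Y"
  by (erule is_path_mono) (simp add: TArc_def)

lemma path_reach_TArc_TStates:
  assumes "path_reach (TArc iv k M1 M2) X Y" "X \<in> TStates iv k M1 M2"
  shows "Y \<in> TStates iv k M1 M2"
proof -
  obtain w xs where p: "is_path (TArc iv k M1 M2) X w xs Y"
    using assms(1) unfolding path_reach_def by blast
  show ?thesis
  proof (cases w rule: rev_cases)
    case Nil
    then have "Y = X"
      using is_path_NilD[OF p[unfolded Nil]] by simp
    then show ?thesis
      using assms(2) by simp
  next
    case (snoc w' a)
    then have "TArc iv k M1 M2 (xs ! length w') a (xs ! Suc (length w'))" "xs ! Suc (length w') = Y"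
      using is_path_step[OF p, of "length w'"] is_path_last[OF p] by simp_all
    then show ?thesis
      unfolding TArc_def by simp
  qed
qed

lemma SCCs_eq_component:
  assumes "s \<in> SCCs iv k M1 M2" "A \<in> s"
  shows "A \<in> TStates iv k M1 M2"
    and "s = {B. path_reach (TArc iv k M1 M2) A B \<and> path_reach (TArc iv k M1 M2) B A}"
proof -
  have treach: "treach iv k M1 M2 = path_reach (TArc iv k M1 M2)"
    by (intro ext) (simp add: treach_def path_reach_def)
  obtain X where "s = scc iv k M1 M2 X"
    using assms(1) unfolding SCCs_def by blast
  then have s: "s = {Y \<in> TStates iv k M1 M2. path_reach (TArc iv k M1 M2) X Y \<and> path_reach (TArc iv k M1 M2) Y X}"
    unfolding scc_def treach by simp
  then have A: "A \<in> TStates iv k M1 M2" "path_reach (TArc iv k M1 M2) X A" "path_reach (TArc iv k M1 M2) A X"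
    using assms(2) by auto
  then show "A \<in> TStates iv k M1 M2"
    by simp
  show "s = {B. path_reach (TArc iv k M1 M2) A B \<and> path_reach (TArc iv k M1 M2) B A}"
  proof (intro equalityI subsetI)
    fix B assume "B \<in> s"
    then have "path_reach (TArc iv k M1 M2) X B" "path_reach (TArc iv k M1 M2) B X"
      using s by auto
    then show "B \<in> {B. path_reach (TArc iv k M1 M2) A B \<and> path_reach (TArc iv k M1 M2) B A}"
      using path_reach_trans[OF A(3)] path_reach_trans[OF _ A(2)] by simp
  next
    fix B assume "B \<in> {B. path_reach (TArc iv k M1 M2) A B \<and> path_reach (TArc iv k M1 M2) B A}"
    then have B: "path_reach (TArc iv k M1 M2) A B" "path_reach (TArc iv k M1 M2) B A"
      by auto
    have "B \<in> TStates iv k M1 M2"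
      using path_reach_TArc_TStates[OF B(1) A(1)] .
    moreover have "path_reach (TArc iv k M1 M2) X B" "path_reach (TArc iv k M1 M2) B X"
      using path_reach_trans[OF A(2) B(1)] path_reach_trans[OF B(2) A(3)] .
    ultimately show "B \<in> s"
      using s by simp
  qed
qed

theorem lemma5:
  fixes iv :: "'a::finite \<Rightarrow> 'a" and \<kappa> :: nat
    and M1 :: "('q1::finite, 'a) dfa" and M2 :: "('q2::finite, 'a) dfa"
    and L1 L2 :: "'a list set"
    and r :: "('q1, 'q2) astate rel"
    and s :: "('q1, 'q2) astate set" and As :: "('q1, 'q2) astate"
    and v :: "'a list"
  assumes "card (UNIV :: 'a set) \<ge> 2"
    and "\<forall>a. iv (iv a) = a"
    and "\<kappa> > 0"
    and "lang M1 = L1"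
    and "lang M2 = bar iv ` L2"
    and "regular (Hk iv \<kappa> L1 L2)"
    and "linear_order_on (TStates iv \<kappa> M1 M2) r"
    and "s \<in> SCCs iv \<kappa> M1 M2"
    and "As \<in> s" and "\<forall>B \<in> s. (As, B) \<in> r"
    and "v \<noteq> []" and "\<exists>xs. is_path (TArc iv \<kappa> M1 M2) As v xs As"
    and "\<forall>u. u \<noteq> [] \<and> (\<exists>xs. is_path (TArc iv \<kappa> M1 M2) As u xs As) \<longrightarrow> length v \<le> length u"
  shows "(\<forall>w xs F. is_path (TArc iv \<kappa> M1 M2) As w xs F \<and> F \<in> AFinal iv \<kappa> M1 M2 \<longrightarrow>
            (\<exists>n \<ge> 1. prefix w (concat (replicate n v))))
    \<and> (\<forall>u. u \<noteq> [] \<and> (\<exists>xs. is_path (TArc iv \<kappa> M1 M2) As u xs As) \<and> length u = length v \<longrightarrow> u = v)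
    \<and> (\<forall>xs. is_path (TArc iv \<kappa> M1 M2) As v xs As \<longrightarrow>
            (\<forall>B \<in> s - {As}. card {i. i \<le> length v \<and> xs ! i = B} = 1))
    \<and> length v = card s"
proof -
  note core = loop_path_to_AFinal_prefix_pow[OF assms(2-6)]
  note s = SCCs_eq_component[OF assms(8,9)]
  obtain I x xs where I: "I \<in> AInit iv \<kappa> M1 M2" "is_path (AArc iv \<kappa> M1 M2) I x xs As"
    using s(1) unfolding TStates_def by blast
  obtain F0 w0 ws0 where F0: "F0 \<in> AFinal iv \<kappa> M1 M2" "is_path (AArc iv \<kappa> M1 M2) As w0 ws0 F0"
    using s(1) unfolding TStates_def by blast
  obtain vs where vs: "is_path (TArc iv \<kappa> M1 M2) As v vs As"
    using assms(12) by blast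
  note v_loop = TArc_path_AArc[OF vs]
  have final_prefix: "\<exists>N. prefix w (concat (replicate N v))"
    if "is_path (AArc iv \<kappa> M1 M2) As w ws F" "F \<in> AFinal iv \<kappa> M1 M2" for w ws F
    using core[OF I v_loop assms(11) that] .
  interpret shortest_loop "TArc iv \<kappa> M1 M2" As v
  proof
    show "xs = ys" if "is_path (TArc iv \<kappa> M1 M2) As w xs As" "is_path (TArc iv \<kappa> M1 M2) As w ys As"
      for w xs ys
      using AArc_path_unique[OF that[THEN TArc_path_AArc] AArc_loop_level[OF v_loop assms(11)]] .
    show "\<exists>N. prefix u (concat (replicate N v))" if u: "is_path (TArc iv \<kappa> M1 M2) As u us As" for u us
    proof -
      obtain N where "prefix (u @ w0) (concat (replicate N v))"
        using final_prefix[OF is_path_append[OF TArc_path_AArc[OF u] F0(2)] F0(1)] by blast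
      then have "prefix u (concat (replicate N v))"
        using prefix_order.trans[of u "u @ w0"] by simp
      then show ?thesis ..
    qed
  next
    show "\<exists>xs. is_path (TArc iv \<kappa> M1 M2) As v xs As" "v \<noteq> []"
      using assms(12,11) by simp_all
    show "length v \<le> length u" if "u \<noteq> []" "is_path (TArc iv \<kappa> M1 M2) As u xs As" for u xs
      using assms(13) that by auto
  qed
  have "\<exists>n \<ge> 1. prefix w (concat (replicate n v))"
    if w: "is_path (TArc iv \<kappa> M1 M2) As w ws F" and F: "F \<in> AFinal iv \<kappa> M1 M2" for w ws F
  proof -
    obtain N where "prefix w (concat (replicate N v))"
      using final_prefix[OF TArc_path_AArc[OF w] F] by blast
    then have "prefix w (concat (replicate (Suc N) v))"
      using prefix_order.trans prefix_concat_replicate_mono[of N "Suc N" v] by simp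
    then show ?thesis
      by (intro exI[of _ "Suc N"]) simp
  qed
  moreover have "\<forall>u. u \<noteq> [] \<and> (\<exists>xs. is_path (TArc iv \<kappa> M1 M2) As u xs As) \<and> length u = length v \<longrightarrow> u = v"
    using loop_eq_v by auto
  moreover have "\<forall>xs. is_path (TArc iv \<kappa> M1 M2) As v xs As \<longrightarrow>
      (\<forall>B \<in> s - {As}. card {i. i \<le> length v \<and> xs ! i = B} = 1)"
    using v_path_visits_once unfolding s(2) by simp
  moreover have "length v = card s"
    using length_v_eq_card_component unfolding s(2) .
  ultimately show ?thesis
    by (intro conjI) auto
qed

end
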